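(* Let $m,n\ge1$ and let $a_{ij}\ge1$ be real numbers ($1\le i\le n$, $1\le j\le m$). Then $$\prod_{i=1}^n\Bigl\{\prod_{j=1}^ma_{ij}-\prod_{j=1}^m(a_{ij}-1)\Bigr\}\ \ge\ \prod_{j=1}^m\prod_{i=1}^na_{ij}-\prod_{j=1}^m\Bigl(\prod_{i=1}^na_{ij}-1\Bigr).$$ Equality holds if and only if one of the following holds: (i) $m=1$ or $n=1$; (ii) there is $j$ with $a_{ij}=1$ for all $i$; (iii) there is $i_0$ with $a_{ij}=1$ for all $i\ne i_0$ and all $j$. *)

theory Defs
  imports Complex_Main
begin

end

theory Submission
  imports Defs
begin

text \<open>Write \<open>gap x = (\<Prod>j. x j) - (\<Prod>j. x j - 1)\<close>. For two rows \<open>x, y \<ge> 1\<close> the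
  substitution \<open>x = 1 + u\<close>, \<open>y = 1 + v\<close> turns \<open>gap x * gap y - gap (x * y)\<close> into
  \<open>\<Prod>(uv + u + v) + \<Prod>uv - \<Prod>(uv + u) - \<Prod>(uv + v)\<close>; adding one column multiplies this
  by \<open>uv\<close> and adds two differences of products with nonnegative factors, so it is nonnegative,
  and it vanishes exactly in the degenerate cases. The theorem then follows by induction over the
  rows, since the gap of a single row is positive.\<close>

lemma prod_eq_prod_iff_mono:
  fixes f g :: "'a \<Rightarrow> 'b::linordered_idom"
  assumes "finite J" and "\<And>j. j \<in> J \<Longrightarrow> 0 \<le> f j \<and> f j \<le> g j"
  shows "prod f J = prod g J \<longleftrightarrow> (\<exists>j\<in>J. g j = 0) \<or> (\<forall>j\<in>J. f j = g j)"
proof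
  assume eq: "prod f J = prod g J"
  show "(\<exists>j\<in>J. g j = 0) \<or> (\<forall>j\<in>J. f j = g j)"
  proof (rule ccontr)
    assume "\<not> ?thesis"
    then obtain i where "i \<in> J" "f i < g i" and "\<And>j. j \<in> J \<Longrightarrow> 0 < g j"
      using assms(2) by (metis order.not_eq_order_implies_strict order.trans)
    then have "prod f J < prod g J"
      using assms by (intro prod_mono_strict) auto
    with eq show False by simp
  qed
next
  assume "(\<exists>j\<in>J. g j = 0) \<or> (\<forall>j\<in>J. f j = g j)"
  then show "prod f J = prod g J"
  proof
    assume "\<exists>j\<in>J. g j = 0"
    then obtain j where "j \<in> J" "g j = 0" "f j = 0"
      using assms(2) by (metis order.antisym)
    with assms(1) show ?thesis by (metis prod_zero_iff)
  qed (rule prod.cong[OF refl], simp)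
qed

lemma prod_eq_prod_add_iff:
  fixes p q :: "'a \<Rightarrow> 'b::linordered_idom"
  assumes "finite J" and "\<And>j. j \<in> J \<Longrightarrow> 0 \<le> p j" and "\<And>j. j \<in> J \<Longrightarrow> 0 \<le> q j"
  shows "prod p J = (\<Prod>j\<in>J. p j + q j) \<longleftrightarrow> (\<exists>j\<in>J. p j = 0 \<and> q j = 0) \<or> (\<forall>j\<in>J. q j = 0)"
proof -
  have "\<And>j. j \<in> J \<Longrightarrow> p j + q j = 0 \<longleftrightarrow> p j = 0 \<and> q j = 0"
    using assms(2,3) by (simp add: add_nonneg_eq_0_iff)
  then show ?thesis
    using assms by (subst prod_eq_prod_iff_mono) auto
qed

lemma prod_eq_1_iff_ge_1:
  fixes f :: "'a \<Rightarrow> 'b::linordered_idom"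
  assumes "finite A" and "\<And>x. x \<in> A \<Longrightarrow> 1 \<le> f x"
  shows "prod f A = 1 \<longleftrightarrow> (\<forall>x\<in>A. f x = 1)"
  using less_1_prod2[of A _ f] assms by (force simp: order.order_iff_strict)

definition cross_defect :: "('a \<Rightarrow> real) \<Rightarrow> ('a \<Rightarrow> real) \<Rightarrow> 'a set \<Rightarrow> real" where
  "cross_defect u v J =
     (\<Prod>j\<in>J. u j * v j + u j + v j) + (\<Prod>j\<in>J. u j * v j)
       - (\<Prod>j\<in>J. u j * v j + u j) - (\<Prod>j\<in>J. u j * v j + v j)"

lemma cross_defect_insert:
  assumes "finite J" and "k \<notin> J"
  shows "cross_defect u v (insert k J) =
    cross_defect u v J * (u k * v k)
      + ((\<Prod>j\<in>J. u j * v j + u j + v j) - (\<Prod>j\<in>J. u j * v j + u j)) * u k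
      + ((\<Prod>j\<in>J. u j * v j + u j + v j) - (\<Prod>j\<in>J. u j * v j + v j)) * v k"
  using assms by (simp add: cross_defect_def algebra_simps)

lemma cross_defect_nonneg:
  assumes "finite J" and "\<And>j. j \<in> J \<Longrightarrow> 0 \<le> u j" and "\<And>j. j \<in> J \<Longrightarrow> 0 \<le> v j"
  shows "0 \<le> cross_defect u v J"
  using assms
proof (induction J rule: finite_induct)
  case empty
  then show ?case by (simp add: cross_defect_def)
next
  case (insert k J)
  have "(\<Prod>j\<in>J. u j * v j + u j) \<le> (\<Prod>j\<in>J. u j * v j + u j + v j)"
    and "(\<Prod>j\<in>J. u j * v j + v j) \<le> (\<Prod>j\<in>J. u j * v j + u j + v j)"
    using insert.prems by (auto intro!: prod_mono)
  then show ?case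
    using insert by (simp add: cross_defect_insert)
qed

lemma cross_defect_insert_eq_0_iff:
  assumes "finite J" and "k \<notin> J"
    and "\<And>j. j \<in> insert k J \<Longrightarrow> 0 \<le> u j" and "\<And>j. j \<in> insert k J \<Longrightarrow> 0 \<le> v j"
  shows "cross_defect u v (insert k J) = 0 \<longleftrightarrow>
      (cross_defect u v J = 0 \<or> u k = 0 \<or> v k = 0)
      \<and> ((\<exists>j\<in>J. u j = 0 \<and> v j = 0) \<or> (\<forall>j\<in>J. v j = 0) \<or> u k = 0)
      \<and> ((\<exists>j\<in>J. u j = 0 \<and> v j = 0) \<or> (\<forall>j\<in>J. u j = 0) \<or> v k = 0)"
proof -
  define A where "A = (\<Prod>j\<in>J. u j * v j + u j + v j)"
  define B where "B = (\<Prod>j\<in>J. u j * v j + u j)"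
  define C where "C = (\<Prod>j\<in>J. u j * v j + v j)"
  have "A = B \<longleftrightarrow> (\<exists>j\<in>J. u j = 0 \<and> v j = 0) \<or> (\<forall>j\<in>J. v j = 0)"
    using prod_eq_prod_add_iff[of J "\<lambda>j. u j * v j + u j" v] assms
    by (auto simp: A_def B_def add.assoc)
  moreover have "A = C \<longleftrightarrow> (\<exists>j\<in>J. u j = 0 \<and> v j = 0) \<or> (\<forall>j\<in>J. u j = 0)"
    using prod_eq_prod_add_iff[of J "\<lambda>j. u j * v j + v j" u] assms
    by (auto simp: A_def C_def ac_simps)
  moreover have "B \<le> A" "C \<le> A"
    using assms by (auto simp: A_def B_def C_def intro!: prod_mono)
  moreover have "0 \<le> cross_defect u v J" "0 \<le> u k * v k"
    using assms by (auto intro!: cross_defect_nonneg)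
  ultimately show ?thesis
    using assms
    by (auto simp: cross_defect_insert A_def[symmetric] B_def[symmetric] C_def[symmetric]
             add_nonneg_eq_0_iff)
qed

lemma cross_defect_eq_0_iff:
  assumes "finite J" and "\<And>j. j \<in> J \<Longrightarrow> 0 \<le> u j" and "\<And>j. j \<in> J \<Longrightarrow> 0 \<le> v j"
  shows "cross_defect u v J = 0 \<longleftrightarrow>
    card J \<le> 1 \<or> (\<exists>j\<in>J. u j = 0 \<and> v j = 0) \<or> (\<forall>j\<in>J. u j = 0) \<or> (\<forall>j\<in>J. v j = 0)"
  using assms
proof (induction J rule: finite_induct)
  case empty
  then show ?case by (simp add: cross_defect_def)
next
  case (insert k J)
  show ?case
  proof (cases "J = {}")
    case True
    then show ?thesis by (simp add: cross_defect_def)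
  next
    case False
    have IH: "cross_defect u v J = 0 \<longleftrightarrow>
      card J \<le> 1 \<or> (\<exists>j\<in>J. u j = 0 \<and> v j = 0) \<or> (\<forall>j\<in>J. u j = 0) \<or> (\<forall>j\<in>J. v j = 0)"
      using insert by blast
    have step: "cross_defect u v (insert k J) = 0 \<longleftrightarrow>
      (cross_defect u v J = 0 \<or> u k = 0 \<or> v k = 0)
      \<and> ((\<exists>j\<in>J. u j = 0 \<and> v j = 0) \<or> (\<forall>j\<in>J. v j = 0) \<or> u k = 0)
      \<and> ((\<exists>j\<in>J. u j = 0 \<and> v j = 0) \<or> (\<forall>j\<in>J. u j = 0) \<or> v k = 0)"
      by (rule cross_defect_insert_eq_0_iff) (use insert in auto)
    have "\<not> card (insert k J) \<le> 1"
      using False insert.hyps by (simp add: Suc_le_eq card_gt_0_iff)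
    moreover have "(\<forall>j\<in>J. u j = 0) \<and> (\<forall>j\<in>J. v j = 0) \<longrightarrow> (\<exists>j\<in>J. u j = 0 \<and> v j = 0)"
      using False by blast
    moreover have "card J \<le> 1 \<longrightarrow>
        ((\<exists>j\<in>J. u j = 0 \<and> v j = 0) \<longleftrightarrow> (\<forall>j\<in>J. u j = 0) \<and> (\<forall>j\<in>J. v j = 0))"
    proof
      assume "card J \<le> 1"
      then have "card J = 1"
        using False insert.hyps by (simp add: le_Suc_eq)
      then obtain j where "J = {j}" by (rule card_1_singletonE)
      then show "(\<exists>j\<in>J. u j = 0 \<and> v j = 0) \<longleftrightarrow> (\<forall>j\<in>J. u j = 0) \<and> (\<forall>j\<in>J. v j = 0)"
        by simp
    qed
    ultimately show ?thesis
      unfolding step IH ball_simps(7) bex_simps(5)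
      by blast
  qed
qed

definition prod_gap :: "('a \<Rightarrow> real) \<Rightarrow> 'a set \<Rightarrow> real" where
  "prod_gap x J = (\<Prod>j\<in>J. x j) - (\<Prod>j\<in>J. x j - 1)"

lemma prod_gap_mult_defect:
  "prod_gap x J * prod_gap y J - prod_gap (\<lambda>j. x j * y j) J =
     cross_defect (\<lambda>j. x j - 1) (\<lambda>j. y j - 1) J"
proof -
  have factors: "(\<lambda>j. (x j - 1) * (y j - 1) + (x j - 1) + (y j - 1)) = (\<lambda>j. x j * y j - 1)"
    "(\<lambda>j. (x j - 1) * (y j - 1) + (x j - 1)) = (\<lambda>j. (x j - 1) * y j)"
    "(\<lambda>j. (x j - 1) * (y j - 1) + (y j - 1)) = (\<lambda>j. x j * (y j - 1))"
    by (auto simp: algebra_simps)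
  show ?thesis
    unfolding cross_defect_def factors prod_gap_def prod.distrib by (simp add: algebra_simps)
qed

lemma prod_gap_pos:
  assumes "finite J" and "J \<noteq> {}" and "\<And>j. j \<in> J \<Longrightarrow> 1 \<le> x j"
  shows "0 < prod_gap x J"
proof -
  obtain j where "j \<in> J" using assms(2) by blast
  then have "(\<Prod>j\<in>J. x j - 1) < (\<Prod>j\<in>J. x j)"
    using assms by (intro prod_mono_strict) force+
  then show ?thesis by (simp add: prod_gap_def)
qed

lemma prod_gap_mult_le:
  assumes "finite J" and "\<And>j. j \<in> J \<Longrightarrow> 1 \<le> x j" and "\<And>j. j \<in> J \<Longrightarrow> 1 \<le> y j"
  shows "prod_gap (\<lambda>j. x j * y j) J \<le> prod_gap x J * prod_gap y J"
  using cross_defect_nonneg[of J "\<lambda>j. x j - 1" "\<lambda>j. y j - 1"] assms prod_gap_mult_defect[of x J y]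
  by simp

lemma prod_gap_mult_eq_iff:
  assumes "finite J" and "\<And>j. j \<in> J \<Longrightarrow> 1 \<le> x j" and "\<And>j. j \<in> J \<Longrightarrow> 1 \<le> y j"
  shows "prod_gap (\<lambda>j. x j * y j) J = prod_gap x J * prod_gap y J \<longleftrightarrow>
    card J \<le> 1 \<or> (\<exists>j\<in>J. x j = 1 \<and> y j = 1) \<or> (\<forall>j\<in>J. x j = 1) \<or> (\<forall>j\<in>J. y j = 1)"
  using cross_defect_eq_0_iff[of J "\<lambda>j. x j - 1" "\<lambda>j. y j - 1"] assms prod_gap_mult_defect[of x J y]
  by auto

definition degenerate_array :: "'a set \<Rightarrow> 'b set \<Rightarrow> ('a \<Rightarrow> 'b \<Rightarrow> 'c::one) \<Rightarrow> bool" where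
  "degenerate_array I J a \<longleftrightarrow>
     card I \<le> 1 \<or> card J \<le> 1 \<or> (\<exists>j\<in>J. \<forall>i\<in>I. a i j = 1)
     \<or> (\<exists>i0\<in>I. \<forall>i\<in>I. \<forall>j\<in>J. i \<noteq> i0 \<longrightarrow> a i j = 1)"

lemma degenerate_array_insert:
  assumes "finite I" and "I \<noteq> {}" and "k \<notin> I"
  shows "degenerate_array (insert k I) J a \<longleftrightarrow>
    degenerate_array I J a \<and>
    (card J \<le> 1 \<or> (\<exists>j\<in>J. a k j = 1 \<and> (\<forall>i\<in>I. a i j = 1))
      \<or> (\<forall>j\<in>J. a k j = 1) \<or> (\<forall>j\<in>J. \<forall>i\<in>I. a i j = 1))"
proof (cases "card J \<le> 1")
  case False
  then obtain j0 where "j0 \<in> J" by fastforce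
  have "\<not> card (insert k I) \<le> 1"
    using assms by (simp add: Suc_le_eq card_gt_0_iff)
  moreover have "(\<exists>j\<in>J. \<forall>i\<in>insert k I. a i j = 1) \<longleftrightarrow> (\<exists>j\<in>J. a k j = 1 \<and> (\<forall>i\<in>I. a i j = 1))"
    by simp
  moreover have "(\<exists>i0\<in>insert k I. \<forall>i\<in>insert k I. \<forall>j\<in>J. i \<noteq> i0 \<longrightarrow> a i j = 1) \<longleftrightarrow>
      (\<forall>j\<in>J. \<forall>i\<in>I. a i j = 1)
      \<or> (\<forall>j\<in>J. a k j = 1) \<and> (\<exists>i0\<in>I. \<forall>i\<in>I. \<forall>j\<in>J. i \<noteq> i0 \<longrightarrow> a i j = 1)"
    using assms(3) by fastforce
  moreover have "card I \<le> 1 \<Longrightarrow> \<exists>i0. I = {i0}"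
    using assms by (simp add: card_le_Suc0_iff_eq) blast
  ultimately show ?thesis
    unfolding degenerate_array_def using False \<open>j0 \<in> J\<close> by blast
qed (simp add: degenerate_array_def)

lemma prod_gap_prod_le:
  assumes "finite I" and "I \<noteq> {}" and "finite J" and "J \<noteq> {}"
    and "\<And>i j. i \<in> I \<Longrightarrow> j \<in> J \<Longrightarrow> 1 \<le> a i j"
  shows "prod_gap (\<lambda>j. \<Prod>i\<in>I. a i j) J \<le> (\<Prod>i\<in>I. prod_gap (a i) J)
    \<and> (prod_gap (\<lambda>j. \<Prod>i\<in>I. a i j) J = (\<Prod>i\<in>I. prod_gap (a i) J) \<longleftrightarrow> degenerate_array I J a)"
  using assms(1,2,5)
proof (induction I rule: finite_ne_induct)
  case (singleton i)
  then show ?case by (simp add: degenerate_array_def)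
next
  case (insert k I)
  define col where "col = (\<lambda>j. \<Prod>i\<in>I. a i j)"
  define L where "L = (\<Prod>i\<in>I. prod_gap (a i) J)"
  have ak: "\<And>j. j \<in> J \<Longrightarrow> 1 \<le> a k j"
    and col: "\<And>j. j \<in> J \<Longrightarrow> 1 \<le> col j"
    using insert.prems by (auto simp: col_def intro!: prod_ge_1)
  have col_eq_1: "\<And>j. j \<in> J \<Longrightarrow> col j = 1 \<longleftrightarrow> (\<forall>i\<in>I. a i j = 1)"
    unfolding col_def using insert by (intro prod_eq_1_iff_ge_1) auto
  have IH: "prod_gap col J \<le> L" "prod_gap col J = L \<longleftrightarrow> degenerate_array I J a"
    using insert by (auto simp: col_def L_def)
  have gap_k: "0 < prod_gap (a k) J"
    using ak assms(3,4) by (intro prod_gap_pos) auto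
  have prod_insert: "(\<lambda>j. \<Prod>i\<in>insert k I. a i j) = (\<lambda>j. a k j * col j)"
    "(\<Prod>i\<in>insert k I. prod_gap (a i) J) = prod_gap (a k) J * L"
    using insert.hyps by (simp_all add: col_def L_def)
  have "prod_gap (\<lambda>j. a k j * col j) J \<le> prod_gap (a k) J * prod_gap col J"
    using ak col assms(3) by (intro prod_gap_mult_le) auto
  moreover have "prod_gap (a k) J * prod_gap col J \<le> prod_gap (a k) J * L"
    using IH(1) gap_k by simp
  moreover have "prod_gap (a k) J * prod_gap col J = prod_gap (a k) J * L \<longleftrightarrow> degenerate_array I J a"
    using IH(2) gap_k by simp
  moreover have "prod_gap (\<lambda>j. a k j * col j) J = prod_gap (a k) J * prod_gap col J \<longleftrightarrow>
      card J \<le> 1 \<or> (\<exists>j\<in>J. a k j = 1 \<and> (\<forall>i\<in>I. a i j = 1))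
      \<or> (\<forall>j\<in>J. a k j = 1) \<or> (\<forall>j\<in>J. \<forall>i\<in>I. a i j = 1)"
    using ak col col_eq_1 assms(3) by (subst prod_gap_mult_eq_iff) auto
  ultimately show ?case
    unfolding prod_insert degenerate_array_insert[OF insert.hyps] by argo
qed

theorem mainTheorem3:
  fixes m n :: nat and a :: "nat \<Rightarrow> nat \<Rightarrow> real"
  assumes "m \<ge> 1" and "n \<ge> 1"
    and "\<And>i j. i \<in> {1..n} \<Longrightarrow> j \<in> {1..m} \<Longrightarrow> a i j \<ge> 1"
  shows "(\<Prod>i=1..n. (\<Prod>j=1..m. a i j) - (\<Prod>j=1..m. a i j - 1))
           \<ge> (\<Prod>j=1..m. \<Prod>i=1..n. a i j) - (\<Prod>j=1..m. (\<Prod>i=1..n. a i j) - 1)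
    \<and> ((\<Prod>i=1..n. (\<Prod>j=1..m. a i j) - (\<Prod>j=1..m. a i j - 1))
           = (\<Prod>j=1..m. \<Prod>i=1..n. a i j) - (\<Prod>j=1..m. (\<Prod>i=1..n. a i j) - 1)
         \<longleftrightarrow> (m = 1 \<or> n = 1
              \<or> (\<exists>j\<in>{1..m}. \<forall>i\<in>{1..n}. a i j = 1)
              \<or> (\<exists>i0\<in>{1..n}. \<forall>i\<in>{1..n}. \<forall>j\<in>{1..m}. i \<noteq> i0 \<longrightarrow> a i j = 1)))"
proof -
  have "degenerate_array {1..n} {1..m} a \<longleftrightarrow> m = 1 \<or> n = 1
      \<or> (\<exists>j\<in>{1..m}. \<forall>i\<in>{1..n}. a i j = 1)
      \<or> (\<exists>i0\<in>{1..n}. \<forall>i\<in>{1..n}. \<forall>j\<in>{1..m}. i \<noteq> i0 \<longrightarrow> a i j = 1)"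
    using assms(1,2) by (auto simp: degenerate_array_def)
  moreover have "prod_gap (\<lambda>j. \<Prod>i=1..n. a i j) {1..m} \<le> (\<Prod>i=1..n. prod_gap (a i) {1..m})
    \<and> (prod_gap (\<lambda>j. \<Prod>i=1..n. a i j) {1..m} = (\<Prod>i=1..n. prod_gap (a i) {1..m})
       \<longleftrightarrow> degenerate_array {1..n} {1..m} a)"
    using assms by (intro prod_gap_prod_le) auto
  ultimately show ?thesis
    unfolding prod_gap_def by argo
qed

end
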